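(* Let $\Sigma=\{1,\dots,q\}^{\mathbb N}$ with shift $\sigma$, $\psi:\Sigma\to\mathbb R$ continuous, and let $\mu$ be a conformal measure for $\psi$ (i.e. $\mathcal L_\psi^*\mu=r(\mathcal L_\psi)\mu$). If there is a constant $C>0$ such that $\liminf_{n\to\infty}\xi_n(\underline x)\le C$ for $\mu$-a.e. $\underline x\in\Sigma$, then $\mu$ is a sequential Gibbs measure for $\psi$.
   Context: $\mathcal L_\psi\phi(\underline x)=\sum_{\underline y\in\sigma^{-1}\underline x}e^{\psi(\underline y)}\phi(\underline y)$ on continuous functions, $r(\mathcal L_\psi)$ its spectral radius, $(\mathcal L_\psi^*\mu)(\phi)=\int\mathcal L_\psi\phi\,d\mu$. Cylinders $[a_0\dots a_{n-1}]=\{\underline y:y_i=a_i,0\le i<n\}$; $\psi^n=\sum_{i<n}\psi\circ\sigma^i$. $\xi_n(\underline x)=\sup_{\underline y\in[x_0\dots x_{n-1}]}\sum_{i=0}^{n-1}|\psi(\sigma^i\underline x)-\psi(\sigma^i\underline y)|$. $\mu$ is a sequential Gibbs measure for $\psi$ if there are constants $K\ge1,P$ such that for $\mu$-a.e. $\underline x$ there is an increasing sequence $n_i(\underline x)$ with $K^{-1}\le\mu([x_j\dots x_{n_i-1}])e^{-\psi^{n_i-j}(\sigma^j\underline x)+(n_i-j)P}\le K$ for all $i$ and $0\le j\le n_i-1$. *)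

theory Defs
  imports "HOL-Probability.Probability"
begin

text \<open>Full shift on q symbols, coded as sequences with values in {0..<q}
  (symbol k+1 of the paper is coded as k). The topology on nat \<Rightarrow> nat is
  the product topology (nat discrete), restricted to the shift space.\<close>

definition shift_space :: "nat \<Rightarrow> (nat \<Rightarrow> nat) set" where
  "shift_space q = {x. \<forall>i. x i < q}"

definition shift :: "(nat \<Rightarrow> nat) \<Rightarrow> (nat \<Rightarrow> nat)" where
  "shift x = (\<lambda>i. x (Suc i))"

definition cons_sym :: "nat \<Rightarrow> (nat \<Rightarrow> nat) \<Rightarrow> (nat \<Rightarrow> nat)" where
  "cons_sym a x = (\<lambda>i. case i of 0 \<Rightarrow> a | Suc k \<Rightarrow> x k)"

definition transfer :: "nat \<Rightarrow> ((nat \<Rightarrow> nat) \<Rightarrow> real) \<Rightarrow> ((nat \<Rightarrow> nat) \<Rightarrow> real) \<Rightarrow> (nat \<Rightarrow> nat) \<Rightarrow> real" where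
  "transfer q \<psi> \<phi> x = (\<Sum>a<q. exp (\<psi> (cons_sym a x)) * \<phi> (cons_sym a x))"

definition birkhoff :: "((nat \<Rightarrow> nat) \<Rightarrow> real) \<Rightarrow> nat \<Rightarrow> (nat \<Rightarrow> nat) \<Rightarrow> real" where
  "birkhoff \<psi> n x = (\<Sum>i<n. \<psi> ((shift ^^ i) x))"

definition sup_norm :: "nat \<Rightarrow> ((nat \<Rightarrow> nat) \<Rightarrow> real) \<Rightarrow> real" where
  "sup_norm q \<phi> = (SUP x\<in>shift_space q. \<bar>\<phi> x\<bar>)"

definition transfer_pow_norm :: "nat \<Rightarrow> ((nat \<Rightarrow> nat) \<Rightarrow> real) \<Rightarrow> nat \<Rightarrow> real" where
  "transfer_pow_norm q \<psi> n =
     (SUP \<phi>\<in>{\<phi>. continuous_on (shift_space q) \<phi> \<and> (\<forall>x\<in>shift_space q. \<bar>\<phi> x\<bar> \<le> 1)}.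
        sup_norm q ((transfer q \<psi> ^^ n) \<phi>))"

text \<open>spectral radius via Gelfand's formula r = inf_n ||L^n||^(1/n) (= lim)\<close>
definition spectral_radius_transfer :: "nat \<Rightarrow> ((nat \<Rightarrow> nat) \<Rightarrow> real) \<Rightarrow> real" where
  "spectral_radius_transfer q \<psi> =
     (INF n\<in>{1..}. transfer_pow_norm q \<psi> n powr (1 / real n))"

definition cylinder :: "nat \<Rightarrow> (nat \<Rightarrow> nat) \<Rightarrow> nat \<Rightarrow> nat \<Rightarrow> (nat \<Rightarrow> nat) set" where
  "cylinder q x j n = {y \<in> shift_space q. \<forall>k < n - j. y k = x (j + k)}"

definition xi :: "nat \<Rightarrow> ((nat \<Rightarrow> nat) \<Rightarrow> real) \<Rightarrow> nat \<Rightarrow> (nat \<Rightarrow> nat) \<Rightarrow> real" where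
  "xi q \<psi> n x = (SUP y\<in>cylinder q x 0 n.
      (\<Sum>i<n. \<bar>\<psi> ((shift ^^ i) x) - \<psi> ((shift ^^ i) y)\<bar>))"

definition conformal :: "nat \<Rightarrow> ((nat \<Rightarrow> nat) \<Rightarrow> real) \<Rightarrow> (nat \<Rightarrow> nat) measure \<Rightarrow> bool" where
  "conformal q \<psi> \<mu> \<longleftrightarrow>
     prob_space \<mu> \<and> sets \<mu> = sets (restrict_space borel (shift_space q)) \<and>
     (\<forall>\<phi>. continuous_on (shift_space q) \<phi> \<longrightarrow>
        (\<integral>x. transfer q \<psi> \<phi> x \<partial>\<mu>) = spectral_radius_transfer q \<psi> * (\<integral>x. \<phi> x \<partial>\<mu>))"

definition sequential_gibbs :: "nat \<Rightarrow> ((nat \<Rightarrow> nat) \<Rightarrow> real) \<Rightarrow> (nat \<Rightarrow> nat) measure \<Rightarrow> bool" where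
  "sequential_gibbs q \<psi> \<mu> \<longleftrightarrow>
     (\<exists>K P. K \<ge> 1 \<and> (AE x in \<mu>. \<exists>ns::nat \<Rightarrow> nat. strict_mono ns \<and>
        (\<forall>i. \<forall>j < ns i.
           1 / K \<le> measure \<mu> (cylinder q x j (ns i)) *
                     exp (- birkhoff \<psi> (ns i - j) ((shift ^^ j) x) + real (ns i - j) * P) \<and>
           measure \<mu> (cylinder q x j (ns i)) *
                     exp (- birkhoff \<psi> (ns i - j) ((shift ^^ j) x) + real (ns i - j) * P) \<le> K)))"

end

theory Submission imports Defs begin

text \<open>Conformality gives \<open>\<integral> \<L>\<^sup>n \<phi> d\<mu> = r\<^sup>n \<integral> \<phi> d\<mu>\<close> with \<open>r = r(\<L>)\<close>, and \<open>r > 0\<close> because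
  \<open>\<L> 1\<close> is bounded below. Since \<open>\<L>\<^sup>n\<close> maps the indicator of a cylinder \<open>[b\<^sub>0\<dots>b\<^sub>n\<^sub>-\<^sub>1]\<close> to
  \<open>z \<mapsto> exp \<psi>\<^sup>n(b\<^sub>0\<dots>b\<^sub>n\<^sub>-\<^sub>1 z)\<close>, this yields
  \<open>r\<^sup>n \<mu>[b\<^sub>0\<dots>b\<^sub>n\<^sub>-\<^sub>1] = \<integral> exp \<psi>\<^sup>n(b\<^sub>0\<dots>b\<^sub>n\<^sub>-\<^sub>1 z) d\<mu>(z)\<close>, which lies between
  \<open>exp (\<psi>\<^sup>n b \<plusminus> X)\<close> when \<open>X\<close> bounds the variation of \<open>\<psi>\<^sup>n\<close> on the cylinder. For the
  cylinders \<open>[x\<^sub>j\<dots>x\<^sub>n\<^sub>-\<^sub>1]\<close> this variation is at most \<open>\<xi>\<^sub>n(x)\<close>, and by the \<open>liminf\<close>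
  hypothesis \<open>\<xi>\<^sub>n(x) < C + 1\<close> for infinitely many \<open>n\<close>; along these \<open>n\<close> the Gibbs
  inequalities hold with \<open>K = exp (C + 1)\<close> and \<open>P = ln r\<close>.\<close>

lemma shift_space_eq_PiE: "shift_space q = PiE UNIV (\<lambda>_. {..<q})"
  unfolding shift_space_def by (auto simp: PiE_def Pi_def extensional_def)

lemma compact_shift_space: "compact (shift_space q)"
proof -
  have "compactin (product_topology (\<lambda>_. euclidean) UNIV) (PiE UNIV (\<lambda>_::nat. {..<q::nat}))"
    by (subst compactin_PiE) (auto intro: finite_imp_compact)
  then show ?thesis
    by (simp add: shift_space_eq_PiE euclidean_product_topology)
qed

lemma continuous_on_shift_space_bounded:
  fixes f :: "(nat \<Rightarrow> nat) \<Rightarrow> real"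
  assumes "continuous_on (shift_space q) f"
  obtains B where "\<And>x. x \<in> shift_space q \<Longrightarrow> \<bar>f x\<bar> \<le> B"
  using compact_imp_bounded[OF compact_continuous_image[OF assms compact_shift_space]]
  by (auto simp: bounded_iff)

lemma continuous_on_cons_sym: "continuous_on A (cons_sym a)"
  unfolding cons_sym_def
proof (intro continuous_on_coordinatewise_then_product)
  fix i show "continuous_on A (\<lambda>x. case i of 0 \<Rightarrow> a | Suc k \<Rightarrow> x k)"
    by (cases i) (auto intro: continuous_on_subset[OF continuous_on_product_coordinates])
qed

lemma cons_sym_in_shift_space: "a < q \<Longrightarrow> x \<in> shift_space q \<Longrightarrow> cons_sym a x \<in> shift_space q"
  unfolding cons_sym_def shift_space_def by (auto split: nat.splits)

lemma funpow_shift: "(shift ^^ k) x = (\<lambda>i. x (k + i))"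
  by (induction k arbitrary: x) (auto simp: shift_def)

lemma funpow_shift_in_shift_space: "x \<in> shift_space q \<Longrightarrow> (shift ^^ k) x \<in> shift_space q"
  unfolding funpow_shift shift_space_def by auto

lemma birkhoff_Suc: "birkhoff \<psi> (Suc n) x = \<psi> x + birkhoff \<psi> n (shift x)"
  unfolding birkhoff_def sum.lessThan_Suc_shift by (simp add: funpow_Suc_right del: funpow.simps)

lemma continuous_on_transfer:
  assumes "continuous_on (shift_space q) \<psi>" and "continuous_on (shift_space q) \<phi>"
  shows "continuous_on (shift_space q) (transfer q \<psi> \<phi>)"
proof -
  have cont_cons: "continuous_on (shift_space q) (\<lambda>x. f (cons_sym a x))"
    if "a < q" "continuous_on (shift_space q) f" for a and f :: "_ \<Rightarrow> real"
    using that cons_sym_in_shift_space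
    by (intro continuous_on_compose2[OF that(2) continuous_on_cons_sym]) auto
  show ?thesis unfolding transfer_def[abs_def]
    by (intro continuous_intros cont_cons assms) auto
qed

lemma continuous_on_transfer_pow:
  assumes "continuous_on (shift_space q) \<psi>" and "continuous_on (shift_space q) \<phi>"
  shows "continuous_on (shift_space q) ((transfer q \<psi> ^^ n) \<phi>)"
  by (induction n) (simp_all add: assms continuous_on_transfer)

lemma continuous_on_indicator_cylinder:
  "continuous_on (shift_space q) (indicator (cylinder q b 0 n) :: _ \<Rightarrow> real)"
proof -
  have "continuous_on (shift_space q) (\<lambda>y. \<Prod>k<n. (\<lambda>c. if c = b k then 1 else 0 :: real) (y k))"
    by (intro continuous_intros continuous_on_compose2[OF Topological_Spaces.continuous_on_discrete
          continuous_on_subset[OF continuous_on_product_coordinates]]) auto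
  then show ?thesis
    by (rule continuous_on_cong[THEN iffD1, rotated 2]) (auto simp: indicator_def cylinder_def)
qed

lemma cylinder_eq_cylinder_funpow_shift: "cylinder q x j m = cylinder q ((shift ^^ j) x) 0 (m - j)"
  by (auto simp: cylinder_def funpow_shift)

definition prepend :: "(nat \<Rightarrow> nat) \<Rightarrow> nat \<Rightarrow> (nat \<Rightarrow> nat) \<Rightarrow> (nat \<Rightarrow> nat)" where
  "prepend b n x = (\<lambda>i. if i < n then b i else x (i - n))"

lemma prepend_in_shift_space:
  "b \<in> shift_space q \<Longrightarrow> x \<in> shift_space q \<Longrightarrow> prepend b n x \<in> shift_space q"
  unfolding prepend_def shift_space_def by auto

lemma prepend_in_cylinder:
  "b \<in> shift_space q \<Longrightarrow> x \<in> shift_space q \<Longrightarrow> prepend b n x \<in> cylinder q b 0 n"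
  using prepend_in_shift_space by (auto simp: cylinder_def prepend_def)

lemma cons_sym_prepend: "cons_sym (b 0) (prepend (shift b) n x) = prepend b (Suc n) x"
  unfolding cons_sym_def prepend_def shift_def by (auto split: nat.splits)

lemma shift_prepend_Suc: "shift (prepend b (Suc n) x) = prepend (shift b) n x"
  unfolding prepend_def shift_def by auto

lemma cons_sym_in_cylinder_Suc_iff:
  assumes "b \<in> shift_space q"
  shows "cons_sym a x \<in> cylinder q b 0 (Suc n) \<longleftrightarrow> a = b 0 \<and> x \<in> cylinder q (shift b) 0 n"
  using assms unfolding cylinder_def shift_space_def cons_sym_def shift_def
  by (auto split: nat.splits)

lemma transfer_indicator_cylinder_Suc:
  assumes "b \<in> shift_space q"
  shows "transfer q \<psi> (\<lambda>y. indicator (cylinder q b 0 (Suc n)) y * g y) =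
     (\<lambda>x. indicator (cylinder q (shift b) 0 n) x * (exp (\<psi> (cons_sym (b 0) x)) * g (cons_sym (b 0) x)))"
proof
  fix x
  have "b 0 < q" using assms by (auto simp: shift_space_def)
  have "transfer q \<psi> (\<lambda>y. indicator (cylinder q b 0 (Suc n)) y * g y) x =
     (\<Sum>a<q. if a = b 0
        then indicator (cylinder q (shift b) 0 n) x * (exp (\<psi> (cons_sym a x)) * g (cons_sym a x))
        else 0)"
    unfolding transfer_def
    by (intro sum.cong refl) (auto simp: indicator_def cons_sym_in_cylinder_Suc_iff[OF assms])
  also have "\<dots> = indicator (cylinder q (shift b) 0 n) x * (exp (\<psi> (cons_sym (b 0) x)) * g (cons_sym (b 0) x))"
    using \<open>b 0 < q\<close> by (simp add: sum.delta)
  finally show "transfer q \<psi> (\<lambda>y. indicator (cylinder q b 0 (Suc n)) y * g y) x = \<dots>" .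
qed

lemma transfer_pow_indicator_cylinder:
  assumes "b \<in> shift_space q"
  shows "(transfer q \<psi> ^^ n) (\<lambda>y. indicator (cylinder q b 0 n) y * g y) x =
     (if x \<in> shift_space q then exp (birkhoff \<psi> n (prepend b n x)) * g (prepend b n x) else 0)"
  using assms
proof (induction n arbitrary: b g)
  case 0
  then show ?case by (auto simp: cylinder_def prepend_def birkhoff_def indicator_def)
next
  case (Suc n)
  have "shift b \<in> shift_space q"
    using Suc.prems by (simp add: shift_space_def shift_def)
  then show ?case
    by (simp only: funpow_Suc_right o_apply transfer_indicator_cylinder_Suc[OF Suc.prems] Suc.IH)
      (simp add: cons_sym_prepend birkhoff_Suc shift_prepend_Suc exp_add)
qed

lemma abs_birkhoff_prepend_diff_le_xi:
  assumes "continuous_on (shift_space q) \<psi>"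
    and x: "x \<in> shift_space q" and z: "z \<in> shift_space q" and "j < m"
  shows "\<bar>birkhoff \<psi> (m - j) ((shift ^^ j) x) - birkhoff \<psi> (m - j) (prepend ((shift ^^ j) x) (m - j) z)\<bar>
    \<le> xi q \<psi> m x"
proof -
  define d where "d y i = \<bar>\<psi> ((shift ^^ i) x) - \<psi> ((shift ^^ i) y)\<bar>" for y i
  obtain B where B: "\<And>y. y \<in> shift_space q \<Longrightarrow> \<bar>\<psi> y\<bar> \<le> B"
    using continuous_on_shift_space_bounded[OF assms(1)] by blast
  have bdd: "bdd_above ((\<lambda>y. \<Sum>i<m. d y i) ` cylinder q x 0 m)"
  proof (rule bdd_aboveI2)
    fix y assume "y \<in> cylinder q x 0 m"
    then have y: "y \<in> shift_space q" by (simp add: cylinder_def)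
    have "d y i \<le> 2 * B" for i
      using B[OF funpow_shift_in_shift_space[OF x, of i]] B[OF funpow_shift_in_shift_space[OF y, of i]]
      unfolding d_def by linarith
    then show "(\<Sum>i<m. d y i) \<le> m * (2 * B)"
      using sum_mono[of "{..<m}" "d y" "\<lambda>_. 2 * B"] by simp
  qed
  have shifts: "(shift ^^ i) (prepend ((shift ^^ j) x) (m - j) z) = (shift ^^ (j + i)) (prepend x m z)"
    "(shift ^^ i) ((shift ^^ j) x) = (shift ^^ (j + i)) x" if "i < m - j" for i
    using that \<open>j < m\<close> by (auto simp: funpow_shift prepend_def add.assoc intro!: ext arg_cong[where f = z])
  have "\<bar>birkhoff \<psi> (m - j) ((shift ^^ j) x) - birkhoff \<psi> (m - j) (prepend ((shift ^^ j) x) (m - j) z)\<bar>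
      \<le> (\<Sum>i<m - j. d (prepend x m z) (j + i))"
    unfolding birkhoff_def sum_subtractf[symmetric]
    by (rule order_trans[OF sum_abs]) (simp add: d_def shifts)
  also have "\<dots> = sum (d (prepend x m z)) ((+) j ` {..<m - j})"
    by (simp add: sum.reindex)
  also have "\<dots> \<le> (\<Sum>i<m. d (prepend x m z) i)"
    by (intro sum_mono2) (auto simp: d_def)
  also have "\<dots> \<le> xi q \<psi> m x"
    unfolding xi_def d_def[symmetric]
    using prepend_in_cylinder[OF x z] bdd by (rule cSUP_upper)
  finally show ?thesis .
qed

lemma strict_mono_subseq_less_of_liminf_less:
  fixes f :: "nat \<Rightarrow> real"
  assumes "liminf (\<lambda>n. ereal (f n)) < ereal D"
  obtains ns :: "nat \<Rightarrow> nat" where "strict_mono ns" and "\<And>i. f (ns i) < D"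
proof -
  have "\<not> eventually (\<lambda>n. ereal D \<le> ereal (f n)) sequentially"
    using assms Liminf_bounded[of "ereal D" "\<lambda>n. ereal (f n)" sequentially] by (meson not_le)
  then have "infinite {n. f n < D}"
    by (simp add: not_eventually frequently_cofinite not_le flip: cofinite_eq_sequentially)
  then show ?thesis
    using infinite_enumerate that by blast
qed

locale conformal_measure =
  fixes q :: nat and \<psi> :: "(nat \<Rightarrow> nat) \<Rightarrow> real" and \<mu> :: "(nat \<Rightarrow> nat) measure"
  assumes continuous_potential: "continuous_on (shift_space q) \<psi>"
    and conformal: "conformal q \<psi> \<mu>"
begin

sublocale prob_space \<mu>
  using conformal by (simp add: conformal_def)

lemma sets_eq: "sets \<mu> = sets (restrict_space borel (shift_space q))"
  using conformal by (simp add: conformal_def)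

lemma space_eq: "space \<mu> = shift_space q"
  using sets_eq_imp_space_eq[OF sets_eq] by (simp add: space_restrict_space)

lemma integral_transfer:
  "continuous_on (shift_space q) \<phi> \<Longrightarrow>
    (\<integral>x. transfer q \<psi> \<phi> x \<partial>\<mu>) = spectral_radius_transfer q \<psi> * (\<integral>x. \<phi> x \<partial>\<mu>)"
  using conformal by (simp add: conformal_def)

lemma borel_measurable_continuous:
  "continuous_on (shift_space q) f \<Longrightarrow> (f :: _ \<Rightarrow> real) \<in> borel_measurable \<mu>"
  using borel_measurable_continuous_on_restrict measurable_cong_sets[OF sets_eq refl] by blast

lemma integrable_continuous:
  fixes f :: "(nat \<Rightarrow> nat) \<Rightarrow> real"
  assumes "continuous_on (shift_space q) f"
  shows "integrable \<mu> f"
proof -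
  obtain B where "\<And>x. x \<in> shift_space q \<Longrightarrow> \<bar>f x\<bar> \<le> B"
    using continuous_on_shift_space_bounded[OF assms] by blast
  then show ?thesis
    by (intro integrable_const_bound[where B = B] borel_measurable_continuous assms)
      (auto simp: space_eq)
qed

lemma integral_transfer_pow:
  "continuous_on (shift_space q) \<phi> \<Longrightarrow>
    (\<integral>x. (transfer q \<psi> ^^ n) \<phi> x \<partial>\<mu>) = spectral_radius_transfer q \<psi> ^ n * (\<integral>x. \<phi> x \<partial>\<mu>)"
proof (induction n arbitrary: \<phi>)
  case (Suc n)
  then show ?case
    using continuous_on_transfer[OF continuous_potential Suc.prems]
    by (simp only: funpow_Suc_right o_apply Suc.IH integral_transfer) simp
qed simp

lemma spectral_radius_transfer_pos: "spectral_radius_transfer q \<psi> > 0"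
proof -
  obtain B where B: "\<And>x. x \<in> shift_space q \<Longrightarrow> \<bar>\<psi> x\<bar> \<le> B"
    using continuous_on_shift_space_bounded[OF continuous_potential] by blast
  obtain x0 where "x0 \<in> shift_space q"
    using not_empty by (auto simp: space_eq)
  then have "0 < q" by (auto simp: shift_space_def)
  have "exp (- B) \<le> transfer q \<psi> (\<lambda>_. 1) x" if x: "x \<in> shift_space q" for x
  proof -
    have "exp (- B) \<le> exp (\<psi> (cons_sym 0 x))"
      using B[OF cons_sym_in_shift_space[OF \<open>0 < q\<close> x]] by simp
    also have "\<dots> \<le> transfer q \<psi> (\<lambda>_. 1) x"
      unfolding transfer_def
      using member_le_sum[of 0 "{..<q}" "\<lambda>a. exp (\<psi> (cons_sym a x)) * 1"] \<open>0 < q\<close> by simp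
    finally show ?thesis .
  qed
  then have "(\<integral>x. exp (- B) \<partial>\<mu>) \<le> (\<integral>x. transfer q \<psi> (\<lambda>_. 1) x \<partial>\<mu>)"
    by (intro integral_mono_AE integrable_continuous continuous_on_transfer continuous_potential)
      (auto simp: space_eq)
  then have "exp (- B) \<le> spectral_radius_transfer q \<psi>"
    by (simp add: integral_transfer prob_space)
  then show ?thesis
    using exp_gt_zero less_le_trans by blast
qed

lemma measure_cylinder_mult_spectral_radius:
  assumes "b \<in> shift_space q"
  shows "integrable \<mu> (\<lambda>z. exp (birkhoff \<psi> n (prepend b n z)))"
    and "measure \<mu> (cylinder q b 0 n) * spectral_radius_transfer q \<psi> ^ n =
      (\<integral>z. exp (birkhoff \<psi> n (prepend b n z)) \<partial>\<mu>)"
proof -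
  let ?L = "(transfer q \<psi> ^^ n) (indicator (cylinder q b 0 n))"
  have L_eq: "?L z = exp (birkhoff \<psi> n (prepend b n z))" if "z \<in> space \<mu>" for z
    using that transfer_pow_indicator_cylinder[OF assms, where g = "\<lambda>_. 1" and x = z] by (simp add: space_eq)
  have "integrable \<mu> ?L \<longleftrightarrow> integrable \<mu> (\<lambda>z. exp (birkhoff \<psi> n (prepend b n z)))"
    using L_eq by (rule Bochner_Integration.integrable_cong[OF refl])
  moreover have "integrable \<mu> ?L"
    by (intro integrable_continuous continuous_on_transfer_pow continuous_potential
        continuous_on_indicator_cylinder)
  ultimately show "integrable \<mu> (\<lambda>z. exp (birkhoff \<psi> n (prepend b n z)))"
    by (rule iffD1)
  have "cylinder q b 0 n \<inter> space \<mu> \<in> sets \<mu>"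
    using borel_measurable_continuous[OF continuous_on_indicator_cylinder]
    by (simp only: borel_measurable_indicator_iff)
  moreover have "cylinder q b 0 n \<inter> space \<mu> = cylinder q b 0 n"
    by (auto simp: space_eq cylinder_def)
  ultimately have "measure \<mu> (cylinder q b 0 n) = (\<integral>z. indicator (cylinder q b 0 n) z \<partial>\<mu>)"
    by simp
  also have "\<dots> * spectral_radius_transfer q \<psi> ^ n = (\<integral>z. ?L z \<partial>\<mu>)"
    using integral_transfer_pow[OF continuous_on_indicator_cylinder] by simp
  also have "\<dots> = (\<integral>z. exp (birkhoff \<psi> n (prepend b n z)) \<partial>\<mu>)"
    using L_eq by (rule Bochner_Integration.integral_cong[OF refl])
  finally show "measure \<mu> (cylinder q b 0 n) * spectral_radius_transfer q \<psi> ^ n =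
      (\<integral>z. exp (birkhoff \<psi> n (prepend b n z)) \<partial>\<mu>)" .
qed

lemma measure_cylinder_bounds:
  assumes "b \<in> shift_space q"
    and var: "\<And>z. z \<in> shift_space q \<Longrightarrow> \<bar>birkhoff \<psi> n b - birkhoff \<psi> n (prepend b n z)\<bar> \<le> X"
  shows "exp (birkhoff \<psi> n b - X) \<le> measure \<mu> (cylinder q b 0 n) * spectral_radius_transfer q \<psi> ^ n"
    and "measure \<mu> (cylinder q b 0 n) * spectral_radius_transfer q \<psi> ^ n \<le> exp (birkhoff \<psi> n b + X)"
proof -
  note integrable = measure_cylinder_mult_spectral_radius(1)[OF assms(1)]
  note measure_eq = measure_cylinder_mult_spectral_radius(2)[OF assms(1)]
  have var_bounds: "birkhoff \<psi> n b - X \<le> birkhoff \<psi> n (prepend b n z)"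
    "birkhoff \<psi> n (prepend b n z) \<le> birkhoff \<psi> n b + X" if "z \<in> space \<mu>" for z
    using var[OF that[unfolded space_eq]] by (simp_all add: abs_le_iff)
  have "exp (birkhoff \<psi> n b - X) = (\<integral>z. exp (birkhoff \<psi> n b - X) \<partial>\<mu>)"
    by (simp add: prob_space)
  also have "\<dots> \<le> (\<integral>z. exp (birkhoff \<psi> n (prepend b n z)) \<partial>\<mu>)"
    using var_bounds by (intro integral_mono_AE[OF integrable_const integrable AE_I2]) simp
  finally show "exp (birkhoff \<psi> n b - X) \<le> measure \<mu> (cylinder q b 0 n) * spectral_radius_transfer q \<psi> ^ n"
    unfolding measure_eq .
  have "(\<integral>z. exp (birkhoff \<psi> n (prepend b n z)) \<partial>\<mu>) \<le> (\<integral>z. exp (birkhoff \<psi> n b + X) \<partial>\<mu>)"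
    using var_bounds by (intro integral_mono_AE[OF integrable integrable_const AE_I2]) simp
  also have "\<dots> = exp (birkhoff \<psi> n b + X)"
    by (simp add: prob_space)
  finally show "measure \<mu> (cylinder q b 0 n) * spectral_radius_transfer q \<psi> ^ n \<le> exp (birkhoff \<psi> n b + X)"
    unfolding measure_eq .
qed

lemma measure_cylinder_gibbs_bounds:
  assumes x: "x \<in> shift_space q" and "j < m" and "xi q \<psi> m x \<le> c"
  defines "G \<equiv> measure \<mu> (cylinder q x j m) *
    exp (- birkhoff \<psi> (m - j) ((shift ^^ j) x) + real (m - j) * ln (spectral_radius_transfer q \<psi>))"
  shows "exp (- c) \<le> G" and "G \<le> exp c"
proof -
  define b where "b = (shift ^^ j) x"
  define S where "S = birkhoff \<psi> (m - j) b"
  define X where "X = xi q \<psi> m x"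
  define M where "M = measure \<mu> (cylinder q b 0 (m - j)) * spectral_radius_transfer q \<psi> ^ (m - j)"
  have b: "b \<in> shift_space q"
    using funpow_shift_in_shift_space[OF x] by (simp add: b_def)
  have var: "\<bar>birkhoff \<psi> (m - j) b - birkhoff \<psi> (m - j) (prepend b (m - j) z)\<bar> \<le> X"
    if "z \<in> shift_space q" for z
    unfolding b_def X_def using continuous_potential x that \<open>j < m\<close>
    by (rule abs_birkhoff_prepend_diff_le_xi)
  have M_bounds: "exp (S - X) \<le> M" "M \<le> exp (S + X)"
    using measure_cylinder_bounds[OF b var] by (simp_all add: S_def M_def)
  have exp_P: "exp (real (m - j) * ln (spectral_radius_transfer q \<psi>)) = spectral_radius_transfer q \<psi> ^ (m - j)"
    using spectral_radius_transfer_pos by (simp add: exp_of_nat_mult)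
  have G_eq: "G = M * exp (- S)"
    unfolding G_def M_def S_def b_def exp_add exp_P cylinder_eq_cylinder_funpow_shift[of q x j m]
    by (simp only: mult_ac)
  have "exp (- c) \<le> exp (- X)"
    using \<open>xi q \<psi> m x \<le> c\<close> by (simp add: X_def)
  also have "exp (- X) = exp (S - X) * exp (- S)"
    by (simp flip: exp_add)
  also have "\<dots> \<le> G"
    unfolding G_eq using M_bounds(1) by (rule mult_right_mono) simp
  finally show "exp (- c) \<le> G" .
  have "G \<le> exp (S + X) * exp (- S)"
    unfolding G_eq using M_bounds(2) by (rule mult_right_mono) simp
  also have "\<dots> = exp X"
    by (simp flip: exp_add)
  also have "\<dots> \<le> exp c"
    using \<open>xi q \<psi> m x \<le> c\<close> by (simp add: X_def)
  finally show "G \<le> exp c" .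
qed

end

theorem proposition4:
  fixes q :: nat and \<psi> :: "(nat \<Rightarrow> nat) \<Rightarrow> real" and \<mu> :: "(nat \<Rightarrow> nat) measure" and C :: real
  assumes "q \<ge> 1"
    and "continuous_on (shift_space q) \<psi>"
    and "conformal q \<psi> \<mu>"
    and "C > 0"
    and "AE x in \<mu>. liminf (\<lambda>n. ereal (xi q \<psi> n x)) \<le> ereal C"
  shows "sequential_gibbs q \<psi> \<mu>"
proof -
  interpret conformal_measure q \<psi> \<mu>
    using assms(2,3) by unfold_locales
  define K where "K = exp (C + 1)"
  define P where "P = ln (spectral_radius_transfer q \<psi>)"
  have "AE x in \<mu>. \<exists>ns::nat \<Rightarrow> nat. strict_mono ns \<and> (\<forall>i. \<forall>j < ns i.
      1 / K \<le> measure \<mu> (cylinder q x j (ns i)) *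
        exp (- birkhoff \<psi> (ns i - j) ((shift ^^ j) x) + real (ns i - j) * P) \<and>
      measure \<mu> (cylinder q x j (ns i)) *
        exp (- birkhoff \<psi> (ns i - j) ((shift ^^ j) x) + real (ns i - j) * P) \<le> K)"
    using assms(5) AE_space
  proof eventually_elim
    case (elim x)
    have "liminf (\<lambda>n. ereal (xi q \<psi> n x)) < ereal (C + 1)"
      using elim(1) by (rule le_less_trans) simp
    then obtain ns :: "nat \<Rightarrow> nat" where "strict_mono ns" and xi_less: "\<And>i. xi q \<psi> (ns i) x < C + 1"
      by (rule strict_mono_subseq_less_of_liminf_less) blast
    have "1 / K = exp (- (C + 1))"
      by (simp only: K_def exp_minus inverse_eq_divide)
    then show ?case
      using \<open>strict_mono ns\<close> measure_cylinder_gibbs_bounds[OF elim(2)[unfolded space_eq] _ less_imp_le[OF xi_less]]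
      unfolding K_def P_def by metis
  qed
  moreover have "K \<ge> 1"
    using \<open>C > 0\<close> by (simp add: K_def)
  ultimately show ?thesis
    unfolding sequential_gibbs_def by blast
qed

end
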